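(* Let $u^2:S\times B\to\mathbb{R}$ and let $y:S\to\Delta(B)$ be a non-constant map such that $U^2(\mu_0,y)\ge v^2$. Then every neighborhood of $u^2$ in $\mathbb{R}^{S\times B}$ contains a function $\tilde u^2:S\times B\to\mathbb{R}$ such that $\tilde U^2(\mu_0,y)>\tilde v^2$, where $\tilde U^2,\tilde v^2$ are computed with $\tilde u^2$ in place of $u^2$.
   Context: $S$ and $B$ are finite sets, $m\in\Delta(S)$ has full support (the invariant measure of an irreducible aperiodic Markov chain on $S$). $\mu_0$ is the distribution on $S\times S$ with $\mu_0(s,s)=m(s)$ and $\mu_0(s,t)=0$ for $s\ne t$. For a receiver payoff $u^2:S\times B\to\mathbb{R}$ (extended linearly to mixed actions) and $y:S\to\Delta(B)$, $U^2(\mu_0,y)=\sum_{s\in S}m(s)u^2(s,y(\cdot\mid s))$ and $v^2=\max_{b\in B}\sum_{s\in S}m(s)u^2(s,b)$. A map $y$ is constant if $y(\cdot\mid s)$ does not depend on $s$. *)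

theory Defs
  imports "HOL-Analysis.Analysis"
begin

definition is_dist :: "('a::finite \<Rightarrow> real) \<Rightarrow> bool" where
  "is_dist p \<longleftrightarrow> (\<forall>a. 0 \<le> p a) \<and> (\<Sum>a\<in>UNIV. p a) = 1"

definition mixed_payoff :: "('s \<Rightarrow> 'b::finite \<Rightarrow> real) \<Rightarrow> 's \<Rightarrow> ('b \<Rightarrow> real) \<Rightarrow> real" where
  "mixed_payoff u s q = (\<Sum>b\<in>UNIV. q b * u s b)"

(* U^2(mu_0, y) = sum_s m(s) u^2(s, y(.|s)) *)
definition U2 :: "('s::finite \<Rightarrow> real) \<Rightarrow> ('s \<Rightarrow> 'b::finite \<Rightarrow> real) \<Rightarrow> ('s \<Rightarrow> 'b \<Rightarrow> real) \<Rightarrow> real" where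
  "U2 m u y = (\<Sum>s\<in>UNIV. m s * mixed_payoff u s (y s))"

definition v2 :: "('s::finite \<Rightarrow> real) \<Rightarrow> ('s \<Rightarrow> 'b::finite \<Rightarrow> real) \<Rightarrow> real" where
  "v2 m u = (MAX b\<in>UNIV. \<Sum>s\<in>UNIV. m s * u s b)"

definition constant_map :: "('s \<Rightarrow> 'b \<Rightarrow> real) \<Rightarrow> bool" where
  "constant_map y \<longleftrightarrow> (\<forall>s t. y s = y t)"

end

theory Submission
  imports Defs
begin

text \<open>Push \<open>u\<^sup>2\<close> in the direction of the deviation \<open>d(s,b) = y(b|s) - \<Sum>\<^sub>t m(t) y(b|t)\<close> of \<open>y\<close>
from its \<open>m\<close>-average. Since \<open>d\<close> has \<open>m\<close>-mean zero, the prior payoff of every pure action,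
and hence \<open>v\<^sup>2\<close>, is unchanged; but \<open>U\<^sup>2(\<mu>\<^sub>0,y)\<close> gains \<open>\<epsilon>\<Sum>\<^sub>s m(s) \<parallel>d(s,\<cdot>)\<parallel>\<^sup>2\<close>,
which is positive because \<open>y\<close> is not constant and \<open>m\<close> has full support.\<close>

definition deviation :: "('s::finite \<Rightarrow> real) \<Rightarrow> ('s \<Rightarrow> 'b \<Rightarrow> real) \<Rightarrow> 's \<Rightarrow> 'b \<Rightarrow> real" where
  "deviation m y s b = y s b - (\<Sum>t\<in>UNIV. m t * y t b)"

lemma U2_perturb:
  "U2 m (\<lambda>s b. u s b + e * d s b) y = U2 m u y + e * U2 m d y"
  by (simp add: U2_def mixed_payoff_def distrib_left sum.distrib sum_distrib_left mult_ac)

lemma v2_perturb_mean_zero: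
  assumes "\<And>b. (\<Sum>s\<in>UNIV. m s * d s b) = 0"
  shows "v2 m (\<lambda>s b. u s b + e * d s b) = v2 m u"
proof -
  have "(\<Sum>s\<in>UNIV. m s * (u s b + e * d s b)) = (\<Sum>s\<in>UNIV. m s * u s b)" for b
  proof -
    have "(\<Sum>s\<in>UNIV. m s * (u s b + e * d s b))
          = (\<Sum>s\<in>UNIV. m s * u s b) + e * (\<Sum>s\<in>UNIV. m s * d s b)"
      by (simp add: distrib_left sum.distrib sum_distrib_left mult_ac)
    with assms show ?thesis by simp
  qed
  then show ?thesis by (simp add: v2_def)
qed

lemma deviation_mean_zero:
  assumes "(\<Sum>s\<in>UNIV. m s) = 1"
  shows "(\<Sum>s\<in>UNIV. m s * deviation m y s b) = 0"
  by (simp add: deviation_def right_diff_distrib sum_subtractf sum_distrib_right[symmetric] assms)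

lemma U2_deviation:
  assumes "(\<Sum>s\<in>UNIV. m s) = 1"
  shows "U2 m (deviation m y) y = (\<Sum>s\<in>UNIV. m s * (\<Sum>b\<in>UNIV. (deviation m y s b)\<^sup>2))"
proof -
  let ?d = "deviation m y" and ?yb = "\<lambda>b. \<Sum>t\<in>UNIV. m t * y t b"
  have "U2 m ?d y = (\<Sum>s\<in>UNIV. m s * (\<Sum>b\<in>UNIV. (?d s b + ?yb b) * ?d s b))"
    by (simp add: U2_def mixed_payoff_def deviation_def)
  also have "\<dots> = (\<Sum>s\<in>UNIV. m s * (\<Sum>b\<in>UNIV. (?d s b)\<^sup>2))
                 + (\<Sum>s\<in>UNIV. \<Sum>b\<in>UNIV. m s * (?yb b * ?d s b))"
    by (simp add: power2_eq_square distrib_right sum.distrib distrib_left sum_distrib_left[symmetric])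
  also have "(\<Sum>s\<in>UNIV. \<Sum>b\<in>UNIV. m s * (?yb b * ?d s b))
             = (\<Sum>b\<in>UNIV. ?yb b * (\<Sum>s\<in>UNIV. m s * ?d s b))"
    by (subst sum.swap) (simp add: sum_distrib_left mult.left_commute)
  finally show ?thesis
    using deviation_mean_zero[OF assms, of y] by simp
qed

lemma deviation_nonzero:
  assumes "\<not> constant_map y"
  obtains s b where "deviation m y s b \<noteq> 0"
proof -
  obtain s t where "y s \<noteq> y t"
    using assms by (auto simp: constant_map_def)
  then obtain b where "y s b \<noteq> y t b" by auto
  then have "deviation m y s b \<noteq> 0 \<or> deviation m y t b \<noteq> 0"
    by (auto simp: deviation_def)
  then show ?thesis using that by blast
qed

lemma U2_deviation_pos:
  assumes "(\<Sum>s\<in>UNIV. m s) = 1" "\<And>s. m s > 0" "\<not> constant_map y"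
  shows "U2 m (deviation m y) y > 0"
proof -
  obtain r c where rc: "deviation m y r c \<noteq> 0"
    using deviation_nonzero[OF assms(3)] .
  have "0 < m r * (\<Sum>b\<in>UNIV. (deviation m y r b)\<^sup>2)"
    using assms(2) rc by (intro mult_pos_pos) (auto intro!: sum_pos2[where i=c])
  then have "(\<Sum>s\<in>UNIV. m s * (\<Sum>b\<in>UNIV. (deviation m y s b)\<^sup>2)) > 0"
    using assms(2) less_imp_le
    by (intro sum_pos2[where i=r]) (auto intro!: mult_nonneg_nonneg sum_nonneg)
  then show ?thesis
    using U2_deviation[OF assms(1), of y] by simp
qed

lemma open_contains_perturbation:
  fixes u d :: "'a \<Rightarrow> 'b \<Rightarrow> real"
  assumes "open N" "u \<in> N"
  obtains e where "e > 0" "(\<lambda>s b. u s b + e * d s b) \<in> N"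
proof -
  define f where "f e = (\<lambda>s b. u s b + e * d s b)" for e :: real
  have "continuous_on UNIV f"
    unfolding f_def by (intro continuous_on_coordinatewise_then_product continuous_intros)
  then have "open (f -` N)"
    using assms(1) open_vimage by blast
  moreover have "0 \<in> f -` N"
    using assms(2) by (simp add: f_def)
  ultimately obtain r where "r > 0" "ball 0 r \<subseteq> f -` N"
    using open_contains_ball by blast
  moreover have "r/2 \<in> ball 0 r"
    using \<open>r > 0\<close> by simp
  ultimately have "f (r/2) \<in> N"
    by blast
  with \<open>r > 0\<close> show ?thesis
    using that[of "r/2"] by (simp add: f_def)
qed

theorem lemma11:
  fixes m :: "'s::finite \<Rightarrow> real"
    and u :: "'s \<Rightarrow> 'b::finite \<Rightarrow> real"
    and y :: "'s \<Rightarrow> 'b \<Rightarrow> real"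
  assumes m_dist: "is_dist m"
    and m_full: "\<forall>s. m s > 0"
    and y_dist: "\<forall>s. is_dist (y s)"
    and y_nonconst: "\<not> constant_map y"
    and hyp: "U2 m u y \<ge> v2 m u"
  shows "\<forall>N. open N \<and> u \<in> N \<longrightarrow> (\<exists>u'\<in>N. U2 m u' y > v2 m u')"
proof (intro allI impI)
  fix N :: "('s \<Rightarrow> 'b \<Rightarrow> real) set"
  assume "open N \<and> u \<in> N"
  let ?d = "deviation m y"
  have m_sum: "(\<Sum>s\<in>UNIV. m s) = 1"
    using m_dist by (simp add: is_dist_def)
  obtain e where e: "e > 0" "(\<lambda>s b. u s b + e * ?d s b) \<in> N"
    using open_contains_perturbation \<open>open N \<and> u \<in> N\<close> by blast
  have gain: "U2 m ?d y > 0"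
    using U2_deviation_pos[OF m_sum] m_full y_nonconst by blast
  have "U2 m (\<lambda>s b. u s b + e * ?d s b) y = U2 m u y + e * U2 m ?d y"
    by (rule U2_perturb)
  also have "\<dots> > v2 m u"
    using hyp mult_pos_pos[OF e(1) gain] by linarith
  also have "v2 m u = v2 m (\<lambda>s b. u s b + e * ?d s b)"
    by (rule v2_perturb_mean_zero[symmetric], rule deviation_mean_zero[OF m_sum])
  finally show "\<exists>u'\<in>N. U2 m u' y > v2 m u'"
    using e(2) by blast
qed

end
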